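(* Let $A$, $Q$, $H\subseteq A^Q$ be non-empty finite sets and $\mathcal F$ a clone with carrier $A$ such that (a) $\mathcal F$ satisfies $\Delta^\partial$, or (b) $\mathcal F$ contains a $\partial$-function and $|H(q)|\le2$ for all $q\in Q$. Suppose $H\in\mathrm{Inv}_Q\mathcal F$ and let $P=\{p,q\}\in[Q]^2$. Then one of the following holds: (1) $H|_P=\{g\in A^P: g(p)\in H(p),\ g(q)\in H(q)\}$; (2) there is $\sigma\in S_A$ such that $H|_P=\{g\in A^P: g(p)\in H(p),\ g(q)\in H(q),\ g(q)=\sigma(g(p))\}$; (3) there are $a,b\in A$ such that $H|_P=\{g\in A^P: g(p)\in H(p),\ g(q)\in H(q),\ (g(p)=a\text{ or }g(q)=b)\}$.
   Context: $\mathcal O(A)=\bigcup_{n<\omega}A^{A^n}$. A clone with carrier $A$ is a subset of $\mathcal O(A)$ containing all projections and closed under composition. For $f\in\mathcal O(A)_{[n]}$ and $h_i\in A^Q$, $f(h_0,\dots,h_{n-1})$ is $q\mapsto f(h_0(q)\dots h_{n-1}(q))$; $\mathrm{Inv}_Q\mathcal F$ is the set of $H\subseteq A^Q$ closed under all such compositions with $f\in\mathcal F$. $H(q)=\{h(q):h\in H\}$; $H|_P=\{h|_P:h\in H\}$; $[Q]^2$ is the set of 2-element subsets of $Q$; $S_A$ the set of permutations of $A$; $A^3_3$ the set of triples in $A^3$ with three distinct entries, $\mathrm{ran}\,\mathbf a$ the set of entries of $\mathbf a$. A $\partial$-function is $\partial\in\mathcal O(A)_{[3]}$ with $\partial(xxy)=\partial(xyx)=\partial(yxx)=x$;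 $\mathcal F$ satisfies $\Delta^\partial$ if for all $\mathbf a\in A^3_3$ and $a\in\mathrm{ran}\,\mathbf a$ there is a $\partial$-function $\partial\in\mathcal F$ with $\partial(\mathbf a)=a$. *)

theory Defs
  imports "HOL-Library.FuncSet"
begin

text \<open>An n-ary operation on A is represented as a pair (n, f) where f acts on lists
of length n over A and is undefined elsewhere (so equality is extensional).\<close>

definition valid_args :: "'a set \<Rightarrow> nat \<Rightarrow> 'a list \<Rightarrow> bool" where
  "valid_args A n xs \<longleftrightarrow> length xs = n \<and> set xs \<subseteq> A"

definition is_op :: "'a set \<Rightarrow> nat \<times> ('a list \<Rightarrow> 'a) \<Rightarrow> bool" where
  "is_op A nf \<longleftrightarrow> (\<forall>xs. valid_args A (fst nf) xs \<longrightarrow> snd nf xs \<in> A)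
      \<and> (\<forall>xs. \<not> valid_args A (fst nf) xs \<longrightarrow> snd nf xs = undefined)"

definition proj_op :: "'a set \<Rightarrow> nat \<Rightarrow> nat \<Rightarrow> nat \<times> ('a list \<Rightarrow> 'a)" where
  "proj_op A n i = (n, \<lambda>xs. if valid_args A n xs then xs ! i else undefined)"

definition comp_op :: "'a set \<Rightarrow> ('a list \<Rightarrow> 'a) \<Rightarrow> nat \<Rightarrow> nat \<Rightarrow> (nat \<Rightarrow> 'a list \<Rightarrow> 'a)
    \<Rightarrow> nat \<times> ('a list \<Rightarrow> 'a)" where
  "comp_op A f n m g = (m, \<lambda>xs. if valid_args A m xs then f (map (\<lambda>i. g i xs) [0..<n]) else undefined)"

definition clone :: "'a set \<Rightarrow> (nat \<times> ('a list \<Rightarrow> 'a)) set \<Rightarrow> bool" where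
  "clone A F \<longleftrightarrow> (\<forall>nf\<in>F. is_op A nf)
     \<and> (\<forall>n i. i < n \<longrightarrow> proj_op A n i \<in> F)
     \<and> (\<forall>n f m g. (n, f) \<in> F \<longrightarrow> (\<forall>i<n. (m, g i) \<in> F) \<longrightarrow> comp_op A f n m g \<in> F)"

definition apply_op :: "'q set \<Rightarrow> ('a list \<Rightarrow> 'a) \<Rightarrow> ('q \<Rightarrow> 'a) list \<Rightarrow> ('q \<Rightarrow> 'a)" where
  "apply_op Q f hs = (\<lambda>q\<in>Q. f (map (\<lambda>h. h q) hs))"

definition Inv :: "'a set \<Rightarrow> 'q set \<Rightarrow> (nat \<times> ('a list \<Rightarrow> 'a)) set \<Rightarrow> ('q \<Rightarrow> 'a) set set" where
  "Inv A Q F = {H. H \<subseteq> (Q \<rightarrow>\<^sub>E A) \<and>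
     (\<forall>n f hs. (n, f) \<in> F \<longrightarrow> length hs = n \<longrightarrow> set hs \<subseteq> H \<longrightarrow> apply_op Q f hs \<in> H)}"

definition proj_at :: "('q \<Rightarrow> 'a) set \<Rightarrow> 'q \<Rightarrow> 'a set" where
  "proj_at H q = (\<lambda>h. h q) ` H"

definition restr :: "('q \<Rightarrow> 'a) set \<Rightarrow> 'q set \<Rightarrow> ('q \<Rightarrow> 'a) set" where
  "restr H P = (\<lambda>h. restrict h P) ` H"

definition is_partial :: "'a set \<Rightarrow> nat \<times> ('a list \<Rightarrow> 'a) \<Rightarrow> bool" where
  "is_partial A nf \<longleftrightarrow> is_op A nf \<and> fst nf = 3 \<and>
     (\<forall>x\<in>A. \<forall>y\<in>A. snd nf [x,x,y] = x \<and> snd nf [x,y,x] = x \<and> snd nf [y,x,x] = x)"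

definition Delta_partial :: "'a set \<Rightarrow> (nat \<times> ('a list \<Rightarrow> 'a)) set \<Rightarrow> bool" where
  "Delta_partial A F \<longleftrightarrow> (\<forall>x\<in>A. \<forall>y\<in>A. \<forall>z\<in>A. x \<noteq> y \<and> y \<noteq> z \<and> x \<noteq> z \<longrightarrow>
     (\<forall>a\<in>{x,y,z}. \<exists>d. d \<in> F \<and> is_partial A d \<and> snd d [x,y,z] = a))"

end

theory Submission imports Defs begin

text \<open>The pairs of values \<open>(h p, h q)\<close> attained by \<open>H\<close> form a relation between \<open>H(p)\<close> and
  \<open>H(q)\<close>. Applying a \<open>\<partial>\<close>-function to three tuples that agree at \<open>p\<close> in the first two
  places shows: as soon as some \<open>x\<close> is related to two values, it is related to all of \<open>H(q)\<close>;
  symmetrically for columns. A relation with all projections onto \<open>H(p)\<close>, \<open>H(q)\<close> and this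
  saturation property is either full, one-to-one (hence the graph of a permutation of \<open>A\<close>), or
  a cross \<open>{a} \<times> H(q) \<union> H(p) \<times> {b}\<close>.\<close>

definition rel_between :: "('a \<Rightarrow> 'b \<Rightarrow> bool) \<Rightarrow> 'a set \<Rightarrow> 'b set \<Rightarrow> bool" where
  "rel_between r X Y \<longleftrightarrow>
     (\<forall>x y. r x y \<longrightarrow> x \<in> X \<and> y \<in> Y) \<and> (\<forall>x\<in>X. \<exists>y. r x y) \<and> (\<forall>y\<in>Y. \<exists>x. r x y)"

definition saturated :: "('a \<Rightarrow> 'b \<Rightarrow> bool) \<Rightarrow> 'a set \<Rightarrow> 'b set \<Rightarrow> bool" where
  "saturated r X Y \<longleftrightarrow>
     (\<forall>x y1 y2 y. r x y1 \<and> r x y2 \<and> y1 \<noteq> y2 \<and> y \<in> Y \<longrightarrow> r x y) \<and>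
     (\<forall>x1 x2 y x. r x1 y \<and> r x2 y \<and> x1 \<noteq> x2 \<and> x \<in> X \<longrightarrow> r x y)"

lemma rel_between_converse: "rel_between r X Y \<Longrightarrow> rel_between (\<lambda>y x. r x y) Y X"
  unfolding rel_between_def by blast

lemma saturated_converse: "saturated r X Y \<Longrightarrow> saturated (\<lambda>y x. r x y) Y X"
  unfolding saturated_def by blast

lemma saturated_row_cases:
  assumes rel: "rel_between r X Y" and sat: "saturated r X Y"
    and row: "r x0 y1" "r x0 y2" "y1 \<noteq> y2"
  shows "(\<forall>x\<in>X. \<forall>y\<in>Y. r x y) \<or> (\<exists>b\<in>Y. \<forall>x y. r x y \<longleftrightarrow> x \<in> X \<and> y \<in> Y \<and> (x = x0 \<or> y = b))"
proof (cases "\<forall>x\<in>X. \<forall>y\<in>Y. r x y")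
  case False
  have dom: "\<And>x y. r x y \<Longrightarrow> x \<in> X \<and> y \<in> Y" and left_total: "\<And>x. x \<in> X \<Longrightarrow> \<exists>y. r x y"
    using rel unfolding rel_between_def by blast+
  have rows: "\<And>x y1 y2 y. r x y1 \<Longrightarrow> r x y2 \<Longrightarrow> y1 \<noteq> y2 \<Longrightarrow> y \<in> Y \<Longrightarrow> r x y"
    and columns: "\<And>x1 x2 y x. r x1 y \<Longrightarrow> r x2 y \<Longrightarrow> x1 \<noteq> x2 \<Longrightarrow> x \<in> X \<Longrightarrow> r x y"
    using sat unfolding saturated_def by blast+
  from False obtain x' y' where x'y': "x' \<in> X" "y' \<in> Y" "\<not> r x' y'" by blast
  then obtain b where b: "r x' b" using left_total by blast
  have row_x0: "r x0 y" if "y \<in> Y" for y using rows row that by blast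
  have row_x': "y = b" if "r x' y" for y using rows[of x' b y y'] b x'y' that by blast
  have "x' \<noteq> x0" using row_x0 x'y' by blast
  then have column_b: "r x b" if "x \<in> X" for x using columns[of x0 b x' x] b row_x0 dom that by blast
  have "y = b" if "r x y" "x \<noteq> x0" for x y
    using columns[of x0 y x x'] row_x0 dom row_x' x'y' that by blast
  then show ?thesis using row_x0 column_b dom b by blast
qed blast

lemma saturated_cases:
  assumes rel: "rel_between r X Y" and sat: "saturated r X Y"
  obtains (full) "\<forall>x\<in>X. \<forall>y\<in>Y. r x y"
    | (one_to_one) "\<forall>x y1 y2. r x y1 \<and> r x y2 \<longrightarrow> y1 = y2" "\<forall>x1 x2 y. r x1 y \<and> r x2 y \<longrightarrow> x1 = x2"
    | (cross) a b where "a \<in> X" "b \<in> Y" "\<forall>x y. r x y \<longleftrightarrow> x \<in> X \<and> y \<in> Y \<and> (x = a \<or> y = b)"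
proof -
  have dom: "\<And>x y. r x y \<Longrightarrow> x \<in> X \<and> y \<in> Y" using rel unfolding rel_between_def by blast
  consider "\<forall>x y1 y2. r x y1 \<and> r x y2 \<longrightarrow> y1 = y2" "\<forall>x1 x2 y. r x1 y \<and> r x2 y \<longrightarrow> x1 = x2"
    | (row) x0 y1 y2 where "r x0 y1" "r x0 y2" "y1 \<noteq> y2"
    | (column) x1 x2 y0 where "r x1 y0" "r x2 y0" "x1 \<noteq> x2"
    by blast
  then show ?thesis
  proof cases
    case (row x0 y1 y2)
    with saturated_row_cases[OF rel sat row] full cross dom show ?thesis by blast
  next
    case (column x1 x2 y0)
    with saturated_row_cases[OF rel_between_converse[OF rel] saturated_converse[OF sat] column]
      full cross dom show ?thesis by blast
  qed (rule one_to_one)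
qed

lemma bij_betw_extend_to_permutation:
  assumes "finite A" "X \<subseteq> A" "Y \<subseteq> A" "bij_betw f X Y"
  shows "\<exists>\<sigma>. bij_betw \<sigma> A A \<and> (\<forall>x\<in>X. \<sigma> x = f x)"
proof -
  have "finite X" "finite Y" using assms(1-3) by (auto intro: finite_subset)
  moreover have "card X = card Y" using assms(4) by (rule bij_betw_same_card)
  ultimately have "card (A - X) = card (A - Y)" using assms(2,3) by (simp add: card_Diff_subset)
  then obtain g where g: "bij_betw g (A - X) (A - Y)"
    using finite_same_card_bij assms(1) by blast
  define \<sigma> where "\<sigma> x = (if x \<in> X then f x else g x)" for x
  have "bij_betw \<sigma> X Y" using assms(4) by (subst bij_betw_cong[of _ _ f]) (auto simp: \<sigma>_def)
  moreover have "bij_betw \<sigma> (A - X) (A - Y)"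
    using g by (subst bij_betw_cong[of _ _ g]) (auto simp: \<sigma>_def)
  ultimately have "bij_betw \<sigma> (X \<union> (A - X)) (Y \<union> (A - Y))" by (rule bij_betw_combine) auto
  moreover have "X \<union> (A - X) = A" "Y \<union> (A - Y) = A" using assms by auto
  ultimately show ?thesis by (auto simp: \<sigma>_def)
qed

lemma one_to_one_relation_permutation:
  assumes "finite A" "X \<subseteq> A" "Y \<subseteq> A" and rel: "rel_between r X Y"
    and functional: "\<forall>x y1 y2. r x y1 \<and> r x y2 \<longrightarrow> y1 = y2"
    and injective: "\<forall>x1 x2 y. r x1 y \<and> r x2 y \<longrightarrow> x1 = x2"
  shows "\<exists>\<sigma>. bij_betw \<sigma> A A \<and> (\<forall>x y. r x y \<longleftrightarrow> x \<in> X \<and> y \<in> Y \<and> y = \<sigma> x)"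
proof -
  have dom: "\<And>x y. r x y \<Longrightarrow> x \<in> X \<and> y \<in> Y" and left_total: "\<And>x. x \<in> X \<Longrightarrow> \<exists>y. r x y"
    and right_total: "\<And>y. y \<in> Y \<Longrightarrow> \<exists>x. r x y"
    using rel unfolding rel_between_def by blast+
  define f where "f x = (THE y. r x y)" for x
  have f_eq: "f x = y" if "r x y" for x y
    unfolding f_def by (rule the_equality) (use that functional in blast)+
  have f: "r x y \<longleftrightarrow> x \<in> X \<and> f x = y" for x y
    using f_eq dom left_total by metis
  have "inj_on f X" by (rule inj_onI) (use f injective in metis)
  moreover have "f ` X = Y"
  proof
    show "f ` X \<subseteq> Y" using f dom by blast
    show "Y \<subseteq> f ` X" using f right_total by (metis image_eqI subsetI)
  qed
  ultimately obtain \<sigma> where "bij_betw \<sigma> A A" "\<forall>x\<in>X. \<sigma> x = f x"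
    using bij_betw_extend_to_permutation[OF assms(1-3)] unfolding bij_betw_def by blast
  then show ?thesis using f dom by auto
qed

definition attained :: "('q \<Rightarrow> 'a) set \<Rightarrow> 'q \<Rightarrow> 'q \<Rightarrow> 'a \<Rightarrow> 'a \<Rightarrow> bool" where
  "attained H p q x y \<longleftrightarrow> (\<exists>h\<in>H. h p = x \<and> h q = y)"

lemma attained_swap: "attained H p q x y \<Longrightarrow> attained H q p y x"
  unfolding attained_def by blast

lemma attained_proj_at: "attained H p q x y \<Longrightarrow> x \<in> proj_at H p \<and> y \<in> proj_at H q"
  unfolding attained_def proj_at_def by blast

lemma rel_between_attained: "rel_between (attained H p q) (proj_at H p) (proj_at H q)"
  unfolding rel_between_def attained_def proj_at_def by blast

lemma Inv_values_in: "H \<in> Inv A Q F \<Longrightarrow> h \<in> H \<Longrightarrow> q \<in> Q \<Longrightarrow> h q \<in> A"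
  unfolding Inv_def by auto

lemma proj_at_Inv_subset: "H \<in> Inv A Q F \<Longrightarrow> q \<in> Q \<Longrightarrow> proj_at H q \<subseteq> A"
  unfolding proj_at_def by (auto dest: Inv_values_in)

lemma Inv_partial_apply:
  assumes I: "H \<in> Inv A Q F" and d: "d \<in> F" "is_partial A d" and h: "h1 \<in> H" "h2 \<in> H" "h3 \<in> H"
  shows "apply_op Q (snd d) [h1, h2, h3] \<in> H"
proof -
  have "(3, snd d) \<in> F" using d unfolding is_partial_def by (metis prod.collapse)
  then show ?thesis using I h unfolding Inv_def by auto
qed

lemma partial_for_distinct_values:
  assumes D: "Delta_partial A F \<or> ((\<exists>d\<in>F. is_partial A d) \<and> (\<forall>r\<in>Q. card (proj_at H r) \<le> 2))"
    and fin: "finite H" and q: "q \<in> Q" and I: "H \<in> Inv A Q F"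
    and y: "y1 \<in> proj_at H q" "y2 \<in> proj_at H q" "y \<in> proj_at H q"
    and distinct: "y1 \<noteq> y2" "y \<noteq> y1" "y \<noteq> y2"
  obtains d where "d \<in> F" "is_partial A d" "snd d [y1, y2, y] = y"
proof (cases "Delta_partial A F")
  case True
  moreover have "y1 \<in> A" "y2 \<in> A" "y \<in> A" using y proj_at_Inv_subset[OF I q] by auto
  ultimately show ?thesis using that distinct unfolding Delta_partial_def by (metis insertCI)
next
  case False
  have "finite (proj_at H q)" using fin unfolding proj_at_def by simp
  then have "card {y1, y2, y} \<le> card (proj_at H q)" using y by (intro card_mono) auto
  moreover have "card (proj_at H q) \<le> 2" using D False q by blast
  ultimately show ?thesis using distinct by auto
qed

text \<open>The \<open>\<partial>\<close>-function is applied to \<open>h1, h2, h3\<close>: at \<open>p\<close> it sees \<open>x, x, h3 p\<close> and returns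
  \<open>x\<close>, at \<open>q\<close> it sees three distinct values and was chosen to return \<open>y\<close>.\<close>

lemma attained_row_saturated:
  assumes D: "Delta_partial A F \<or> ((\<exists>d\<in>F. is_partial A d) \<and> (\<forall>r\<in>Q. card (proj_at H r) \<le> 2))"
    and fin: "finite H" and I: "H \<in> Inv A Q F" and pq: "p \<in> Q" "q \<in> Q"
    and r: "attained H p q x y1" "attained H p q x y2" "y1 \<noteq> y2" and y: "y \<in> proj_at H q"
  shows "attained H p q x y"
proof (cases "y = y1 \<or> y = y2")
  case False
  obtain h1 h2 h3 where h: "h1 \<in> H" "h2 \<in> H" "h3 \<in> H"
    and vals: "h1 p = x" "h2 p = x" "h1 q = y1" "h2 q = y2" "h3 q = y"
    using r y unfolding attained_def proj_at_def by auto
  have "y1 \<in> proj_at H q" "y2 \<in> proj_at H q" using attained_proj_at[OF r(1)] attained_proj_at[OF r(2)] by auto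
  then obtain d where d: "d \<in> F" "is_partial A d" "snd d [y1, y2, y] = y"
    using partial_for_distinct_values[OF D fin pq(2) I _ _ y r(3)] False by blast
  define h where "h = apply_op Q (snd d) [h1, h2, h3]"
  have "h \<in> H" unfolding h_def using Inv_partial_apply[OF I d(1,2) h] .
  moreover have "h p = x"
    using d(2) Inv_values_in[OF I h(1) pq(1)] Inv_values_in[OF I h(3) pq(1)] pq(1) vals
    unfolding h_def apply_op_def is_partial_def by auto
  moreover have "h q = y" using pq(2) d(3) vals unfolding h_def apply_op_def by simp
  ultimately show ?thesis unfolding attained_def by blast
qed (use r in auto)

lemma saturated_attained:
  assumes D: "Delta_partial A F \<or> ((\<exists>d\<in>F. is_partial A d) \<and> (\<forall>r\<in>Q. card (proj_at H r) \<le> 2))"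
    and fin: "finite H" and I: "H \<in> Inv A Q F" and pq: "p \<in> Q" "q \<in> Q"
  shows "saturated (attained H p q) (proj_at H p) (proj_at H q)"
  unfolding saturated_def
proof (intro conjI allI impI; elim conjE)
  fix x y1 y2 y
  assume row: "attained H p q x y1" "attained H p q x y2" "y1 \<noteq> y2" "y \<in> proj_at H q"
  show "attained H p q x y" by (rule attained_row_saturated[OF D fin I pq row])
next
  fix x1 x2 y x
  assume column: "attained H p q x1 y" "attained H p q x2 y" "x1 \<noteq> x2" "x \<in> proj_at H p"
  have "attained H q p y x" by (rule attained_row_saturated[OF D fin I pq(2,1)
      attained_swap[OF column(1)] attained_swap[OF column(2)] column(3,4)])
  then show "attained H p q x y" by (rule attained_swap)
qed

lemma restr_pair_eq:
  assumes I: "H \<in> Inv A Q F" and pq: "p \<in> Q" "q \<in> Q"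
  shows "restr H {p, q} = {g \<in> {p, q} \<rightarrow>\<^sub>E A. attained H p q (g p) (g q)}"
proof (intro set_eqI iffI)
  fix g assume "g \<in> restr H {p, q}"
  then obtain h where "h \<in> H" "g = restrict h {p, q}" unfolding restr_def by blast
  then show "g \<in> {g \<in> {p, q} \<rightarrow>\<^sub>E A. attained H p q (g p) (g q)}"
    using Inv_values_in[OF I] pq unfolding attained_def by auto
next
  fix g assume "g \<in> {g \<in> {p, q} \<rightarrow>\<^sub>E A. attained H p q (g p) (g q)}"
  then obtain h where g: "g \<in> {p, q} \<rightarrow>\<^sub>E A" "h \<in> H" "h p = g p" "h q = g q"
    unfolding attained_def by blast
  then have "g = restrict h {p, q}" by (auto simp: PiE_iff extensional_def)
  then show "g \<in> restr H {p, q}" unfolding restr_def using g by blast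
qed

theorem lemma2:
  fixes A :: "'a set" and Q :: "'q set" and H :: "('q \<Rightarrow> 'a) set"
    and F :: "(nat \<times> ('a list \<Rightarrow> 'a)) set" and p q :: 'q
  assumes "finite A" "A \<noteq> {}" "finite Q" "Q \<noteq> {}" "finite H" "H \<noteq> {}"
    and "clone A F"
    and "Delta_partial A F \<or> ((\<exists>d\<in>F. is_partial A d) \<and> (\<forall>r\<in>Q. card (proj_at H r) \<le> 2))"
    and "H \<in> Inv A Q F"
    and "p \<in> Q" "q \<in> Q" "p \<noteq> q"
  shows "restr H {p, q} = {g \<in> {p, q} \<rightarrow>\<^sub>E A. g p \<in> proj_at H p \<and> g q \<in> proj_at H q}
    \<or> (\<exists>\<sigma>. bij_betw \<sigma> A A \<and> restr H {p, q} =
         {g \<in> {p, q} \<rightarrow>\<^sub>E A. g p \<in> proj_at H p \<and> g q \<in> proj_at H q \<and> g q = \<sigma> (g p)})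
    \<or> (\<exists>a\<in>A. \<exists>b\<in>A. restr H {p, q} =
         {g \<in> {p, q} \<rightarrow>\<^sub>E A. g p \<in> proj_at H p \<and> g q \<in> proj_at H q \<and> (g p = a \<or> g q = b)})"
proof -
  note D = assms(8) and I = assms(9) and pq = assms(10,11)
  let ?r = "attained H p q" and ?X = "proj_at H p" and ?Y = "proj_at H q"
  have XA: "?X \<subseteq> A" and YA: "?Y \<subseteq> A" using proj_at_Inv_subset[OF I] pq by auto
  have rel: "rel_between ?r ?X ?Y" by (rule rel_between_attained)
  have restr_eq: "restr H {p, q} = {g \<in> {p, q} \<rightarrow>\<^sub>E A. P (g p) (g q)}"
    if "\<forall>x y. ?r x y \<longleftrightarrow> P x y" for P
    unfolding restr_pair_eq[OF I pq] using that by simp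
  from rel saturated_attained[OF D assms(5) I pq] show ?thesis
  proof (cases rule: saturated_cases)
    case full
    then have "\<forall>x y. ?r x y \<longleftrightarrow> x \<in> ?X \<and> y \<in> ?Y" using attained_proj_at[of H p q] by blast
    from restr_eq[OF this] show ?thesis by (rule disjI1)
  next
    case one_to_one
    then obtain \<sigma> where \<sigma>: "bij_betw \<sigma> A A" "\<forall>x y. ?r x y \<longleftrightarrow> x \<in> ?X \<and> y \<in> ?Y \<and> y = \<sigma> x"
      using one_to_one_relation_permutation[OF assms(1) XA YA rel] by blast
    from \<sigma>(1) restr_eq[OF \<sigma>(2)] show ?thesis by blast
  next
    case (cross a b)
    with restr_eq[OF cross(3)] XA YA show ?thesis by blast
  qed
qed

end
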